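(* For every real $t$ with $1\leq t\leq n$: $S(t)>0$ if and only if $t>\vartheta^+(G)$.
   Context: Let $G$ be a simple graph with vertex set $V=\{1,\dots,n\}$, edge set $E$ and adjacency matrix $A$. Let $e$ be the all-ones vector, $\langle M,N\rangle=\operatorname{trace}(M^TN)$, and $X\geq 0$ mean entrywise nonnegativity. For real $t$ with $1\leq t\leq n$, $Q(t)$ is the semidefinite program $$\min \tfrac12\langle A,X\rangle\ \text{ s.t. } X\succeq 0,\ X\geq 0,\ \operatorname{trace}(X)=t,\ Xe=t\operatorname{diag}(X)$$ over symmetric $n\times n$ matrices $X$, and $S(t)$ denotes its optimal value. Schrijver's number is $$\vartheta^+(G)=\max\ \operatorname{trace}(X)\ \text{ s.t. } X-xx^T\succeq 0,\ \operatorname{diag}(X)=x,\ X_{i,j}=0\ \forall [i,j]\in E,\ X\geq 0.$$ *)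

theory Defs
  imports "HOL-Analysis.Analysis"
begin

text \<open>Vertices are the elements of a finite type 'n (so n = CARD('n)); the simple graph
  is given by a symmetric irreflexive edge relation E. Matrices are real^'n^'n.\<close>

definition simple_graph :: "('n \<Rightarrow> 'n \<Rightarrow> bool) \<Rightarrow> bool" where
  "simple_graph E \<longleftrightarrow> (\<forall>i j. E i j \<longleftrightarrow> E j i) \<and> (\<forall>i. \<not> E i i)"

definition adj_matrix :: "('n::finite \<Rightarrow> 'n \<Rightarrow> bool) \<Rightarrow> real^'n^'n" where
  "adj_matrix E = (\<chi> i j. if E i j then 1 else 0)"

definition ones :: "real^'n" where
  "ones = (\<chi> i. 1)"

definition diag_vec :: "real^'n^'n \<Rightarrow> real^'n" where
  "diag_vec X = (\<chi> i. X $ i $ i)"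

definition outer :: "real^'n \<Rightarrow> real^'n^'n" where
  "outer x = (\<chi> i j. x $ i * x $ j)"

definition frob :: "real^'n^'n \<Rightarrow> real^'n^'n \<Rightarrow> real" where
  "frob M N = trace (transpose M ** N)"

definition psd :: "real^'n^'n \<Rightarrow> bool" where
  "psd X \<longleftrightarrow> transpose X = X \<and> (\<forall>v. v \<bullet> (X *v v) \<ge> 0)"

definition nonneg_mat :: "real^'n^'n \<Rightarrow> bool" where
  "nonneg_mat X \<longleftrightarrow> (\<forall>i j. X $ i $ j \<ge> 0)"

definition Q_feasible :: "real \<Rightarrow> real^'n::finite^'n \<Rightarrow> bool" where
  "Q_feasible t X \<longleftrightarrow> transpose X = X \<and> psd X \<and> nonneg_mat X \<and> trace X = t
     \<and> X *v ones = t *\<^sub>R diag_vec X"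

definition S_val :: "('n::finite \<Rightarrow> 'n \<Rightarrow> bool) \<Rightarrow> real \<Rightarrow> real" where
  "S_val E t = Inf {frob (adj_matrix E) X / 2 | X :: real^'n^'n. Q_feasible t X}"

definition theta_plus :: "('n::finite \<Rightarrow> 'n \<Rightarrow> bool) \<Rightarrow> real" where
  "theta_plus E = Sup {trace X | X :: real^'n^'n. \<exists>x. psd (X - outer x)
      \<and> diag_vec X = x \<and> (\<forall>i j. E i j \<longrightarrow> X $ i $ j = 0) \<and> nonneg_mat X}"

end

theory Submission
  imports Defs
begin

text \<open>Let \<sigma> be the maximum of \<open>\<langle>J, Z\<rangle>\<close> over nonnegative positive semidefinite Z of trace 1
  vanishing on the edges. Rescaling a \<open>\<vartheta>\<^sup>+\<close>-feasible matrix to trace 1 shows \<open>\<vartheta>\<^sup>+ \<le> \<sigma>\<close>,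
  and by Cauchy--Schwarz against e every Q(t)-feasible matrix vanishing on the edges is
  \<open>\<vartheta>\<^sup>+\<close>-feasible, which forces \<open>t \<le> \<vartheta>\<^sup>+\<close>. Conversely, optimality of a maximiser Z under
  the diagonal rescalings \<open>Z \<mapsto> DZD\<close> gives \<open>Ze = \<sigma> diag(Z)\<close>, so \<sigma>Z is Q(\<sigma>)-feasible and
  vanishes on the edges; mixing a Q(s)-feasible matrix with its diagonal part yields Q(t)-feasible
  matrices with no new support for every \<open>1 \<le> t \<le> s\<close>. Hence Q(t) admits a feasible point of
  objective value 0 exactly when \<open>t \<le> \<vartheta>\<^sup>+\<close>, and since the feasible set is compact and the
  objective nonnegative, S(t) is positive otherwise.\<close>

definition quad_form :: "real^'n::finite^'n \<Rightarrow> real^'n \<Rightarrow> real" where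
  "quad_form X v = (\<Sum>i\<in>UNIV. \<Sum>j\<in>UNIV. v$i * X$i$j * v$j)"

definition bilin_form :: "real^'n::finite^'n \<Rightarrow> real^'n \<Rightarrow> real^'n \<Rightarrow> real" where
  "bilin_form X v w = (\<Sum>i\<in>UNIV. \<Sum>j\<in>UNIV. v$i * X$i$j * w$j)"

lemma quad_form_eq_bilin_form: "quad_form X v = bilin_form X v v"
  by (simp add: quad_form_def bilin_form_def)

lemma inner_mult_vec_eq_quad_form: "v \<bullet> (X *v v) = quad_form X v"
  by (simp add: quad_form_def inner_vec_def matrix_vector_mult_def sum_distrib_left
      mult.assoc mult.commute mult.left_commute)

lemma psd_iff_quad_form: "psd X \<longleftrightarrow> (\<forall>i j. X$i$j = X$j$i) \<and> (\<forall>v. 0 \<le> quad_form X v)"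
  by (auto simp: psd_def inner_mult_vec_eq_quad_form transpose_def vec_eq_iff)

lemma bilin_form_commute:
  assumes "\<forall>i j. X$i$j = X$j$i"
  shows "bilin_form X v w = bilin_form X w v"
proof -
  have "bilin_form X v w = (\<Sum>j\<in>UNIV. \<Sum>i\<in>UNIV. v$i * X$i$j * w$j)"
    unfolding bilin_form_def by (rule sum.swap)
  also have "\<dots> = bilin_form X w v"
    unfolding bilin_form_def by (intro sum.cong refl) (metis assms mult.commute mult.assoc)
  finally show ?thesis .
qed

lemma quad_form_add_scaleR:
  assumes "\<forall>i j. X$i$j = X$j$i"
  shows "quad_form X (v + \<mu> *\<^sub>R w) = quad_form X v + 2 * \<mu> * bilin_form X v w + \<mu>\<^sup>2 * quad_form X w"
proof -
  have "quad_form X (v + \<mu> *\<^sub>R w)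
      = quad_form X v + \<mu> * bilin_form X v w + \<mu> * bilin_form X w v + \<mu>\<^sup>2 * quad_form X w"
    unfolding quad_form_def bilin_form_def
    by (simp add: algebra_simps power2_eq_square sum.distrib sum_distrib_left)
  then show ?thesis
    using bilin_form_commute[OF assms, of w v] by simp
qed

lemma sum_axis_mult: "(\<Sum>a\<in>UNIV. axis i 1 $ a * f a) = (f i :: real)"
proof -
  have "(\<Sum>a\<in>UNIV. axis i 1 $ a * f a) = (\<Sum>a\<in>UNIV. if a = i then f a else 0)"
    by (intro sum.cong) (auto simp: axis_def)
  then show ?thesis
    by simp
qed

lemma bilin_form_axis_left: "bilin_form X (axis i 1) w = (\<Sum>j\<in>UNIV. X$i$j * w$j)"
  unfolding bilin_form_def by (simp add: mult.assoc sum_distrib_left[symmetric] sum_axis_mult)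

lemma bilin_form_axis: "bilin_form X (axis i 1) (axis j 1) = X$i$j"
  by (simp add: bilin_form_axis_left mult.commute[of "X$i$_"] sum_axis_mult)

lemma bilin_form_axis_ones: "bilin_form X (axis k 1) ones = (\<Sum>j\<in>UNIV. X$k$j)"
  by (simp add: bilin_form_axis_left ones_def)

lemma quad_form_axis: "quad_form X (axis i 1) = X$i$i"
  by (simp add: quad_form_eq_bilin_form bilin_form_axis)

lemma quad_form_ones: "quad_form X ones = (\<Sum>i\<in>UNIV. \<Sum>j\<in>UNIV. X$i$j)"
  by (simp add: quad_form_def ones_def)

lemma quad_form_scaleR: "quad_form (c *\<^sub>R X) v = c * quad_form X v"
  by (simp add: quad_form_def sum_distrib_left mult.assoc mult.left_commute)

lemma quad_form_add: "quad_form (X + Y) v = quad_form X v + quad_form Y v"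
  by (simp add: quad_form_def sum.distrib[symmetric] distrib_left distrib_right)

lemma quad_form_diff: "quad_form (X - Y) v = quad_form X v - quad_form Y v"
  by (simp add: quad_form_def sum_subtractf[symmetric] right_diff_distrib left_diff_distrib)

lemma quad_form_outer: "quad_form (outer x) v = (v \<bullet> x)\<^sup>2"
proof -
  have "quad_form (outer x) v = (\<Sum>i\<in>UNIV. \<Sum>j\<in>UNIV. (v$i * x$i) * (v$j * x$j))"
    unfolding quad_form_def outer_def by (intro sum.cong refl) (simp add: ac_simps)
  then show ?thesis
    by (simp add: inner_vec_def power2_eq_square sum_product)
qed

lemma psd_diag_nonneg: "psd X \<Longrightarrow> 0 \<le> X$i$i"
  by (metis psd_iff_quad_form quad_form_axis)

lemma psd_two_entry_le: "psd X \<Longrightarrow> 2 * X$i$j \<le> X$i$i + X$j$j"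
proof -
  assume "psd X"
  then have sym: "\<forall>i j. X$i$j = X$j$i" and "0 \<le> quad_form X (axis i 1 + (-1) *\<^sub>R axis j 1)"
    by (auto simp: psd_iff_quad_form simp del: scaleR_minus1_left)
  then show ?thesis
    unfolding quad_form_add_scaleR[OF sym] by (simp add: quad_form_eq_bilin_form bilin_form_axis)
qed

lemma psd_outer: "psd (outer x)"
  unfolding psd_iff_quad_form quad_form_outer by (simp add: outer_def mult.commute)

lemma psd_add: "psd X \<Longrightarrow> psd Y \<Longrightarrow> psd (X + Y)"
  by (simp add: psd_iff_quad_form quad_form_add)

lemma psd_scaleR: "0 \<le> c \<Longrightarrow> psd X \<Longrightarrow> psd (c *\<^sub>R X)"
  by (simp add: psd_iff_quad_form quad_form_scaleR)

definition diag_part :: "real^'n::finite^'n \<Rightarrow> real^'n^'n" where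
  "diag_part X = (\<chi> i j. if i = j then X$i$j else 0)"

lemma psd_diag_part: "psd X \<Longrightarrow> psd (diag_part X)"
proof -
  assume X: "psd X"
  have "quad_form (diag_part X) v = (\<Sum>i\<in>UNIV. \<Sum>j\<in>UNIV. if j = i then X$i$i * (v$i)\<^sup>2 else 0)" for v
    unfolding quad_form_def diag_part_def by (intro sum.cong refl) (auto simp: power2_eq_square)
  then show ?thesis
    using psd_diag_nonneg[OF X] by (auto simp: psd_iff_quad_form diag_part_def intro!: sum_nonneg)
qed

lemma trace_scaleR: "trace (c *\<^sub>R X) = c * trace X"
  by (simp add: trace_def sum_distrib_left)

lemma trace_diag_part: "trace (diag_part X) = trace X"
  by (simp add: trace_def diag_part_def)

lemma row_sum_diag_part: "(\<Sum>j\<in>UNIV. diag_part X $ i $ j) = X$i$i"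
proof -
  have "(\<Sum>j\<in>UNIV. diag_part X $ i $ j) = (\<Sum>j\<in>UNIV. if j = i then X$i$i else 0)"
    by (intro sum.cong) (auto simp: diag_part_def)
  then show ?thesis
    by simp
qed

lemma psd_nonneg_entry_le_trace:
  assumes "psd X" and "nonneg_mat X"
  shows "X$i$j \<le> trace X"
proof -
  have diag: "X$k$k \<le> trace X" for k
    using assms(2) unfolding trace_def nonneg_mat_def
    by (intro member_le_sum[of k UNIV "\<lambda>i. X$i$i"]) auto
  show ?thesis
  proof (cases "i = j")
    case False
    have "(\<Sum>k\<in>{i, j}. X$k$k) \<le> (\<Sum>k\<in>UNIV. X$k$k)"
      using assms(2) by (intro sum_mono2) (auto simp: nonneg_mat_def)
    then have "X$i$i + X$j$j \<le> trace X"
      using False by (simp add: trace_def)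
    then show ?thesis
      using psd_two_entry_le[OF assms(1), of i j] psd_diag_nonneg[OF assms(1), of i]
        psd_diag_nonneg[OF assms(1), of j] by linarith
  qed (use diag in simp)
qed

lemma closed_psd: "closed {X::real^'n::finite^'n. psd X}"
proof -
  have "{X::real^'n^'n. psd X} = {X. \<forall>i j. X$i$j = X$j$i} \<inter> {X. \<forall>v. 0 \<le> quad_form X v}"
    by (auto simp: psd_iff_quad_form)
  moreover have "closed {X::real^'n^'n. \<forall>i j. X$i$j = X$j$i}"
    by (intro closed_Collect_all closed_Collect_eq continuous_intros)
  moreover have "closed {X::real^'n^'n. \<forall>v. 0 \<le> quad_form X v}"
    unfolding quad_form_def by (intro closed_Collect_all closed_Collect_le continuous_intros)
  ultimately show ?thesis
    by auto
qed

lemma closed_nonneg_mat: "closed {X::real^'n::finite^'n. nonneg_mat X}"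
  unfolding nonneg_mat_def by (intro closed_Collect_all closed_Collect_le continuous_intros)

lemma compact_psd_nonneg_trace_Int:
  assumes "closed K"
  shows "compact ({X::real^'n::finite^'n. psd X \<and> nonneg_mat X \<and> trace X = c} \<inter> K)"
proof -
  let ?P = "{X::real^'n^'n. psd X \<and> nonneg_mat X \<and> trace X = c}"
  have "norm X \<le> CARD('n) * CARD('n) * c" if "X \<in> ?P" for X
  proof -
    have X: "psd X" "nonneg_mat X" "trace X = c"
      using that by auto
    have "norm X \<le> (\<Sum>i\<in>UNIV. norm (X$i))"
      unfolding norm_vec_def by (rule L2_set_le_sum) auto
    also have "\<dots> \<le> (\<Sum>i\<in>UNIV. \<Sum>j\<in>UNIV. \<bar>X$i$j\<bar>)"
      by (intro sum_mono norm_le_l1_cart)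
    also have "\<dots> \<le> (\<Sum>i\<in>(UNIV::'n set). \<Sum>j\<in>(UNIV::'n set). c)"
    proof (intro sum_mono)
      fix i j
      have "0 \<le> X$i$j" and "X$i$j \<le> c"
        using X psd_nonneg_entry_le_trace[OF X(1,2), of i j] by (auto simp: nonneg_mat_def)
      then show "\<bar>X$i$j\<bar> \<le> c"
        by simp
    qed
    finally show ?thesis
      by simp
  qed
  then have "bounded ?P"
    unfolding bounded_iff by blast
  moreover have "?P = {X. psd X} \<inter> {X. nonneg_mat X} \<inter> {X. trace X = c}"
    by auto
  moreover have "closed {X::real^'n^'n. trace X = c}"
    unfolding trace_def by (intro closed_Collect_eq continuous_intros)
  ultimately have "compact ?P"
    using closed_psd closed_nonneg_mat by (metis closed_Int compact_eq_bounded_closed)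
  then show ?thesis
    using assms by (rule compact_Int_closed)
qed

lemma Q_feasible_iff_row_sums:
  "Q_feasible t X \<longleftrightarrow> psd X \<and> nonneg_mat X \<and> trace X = t \<and> (\<forall>i. (\<Sum>j\<in>UNIV. X$i$j) = t * X$i$i)"
  by (auto simp: Q_feasible_def psd_def vec_eq_iff matrix_vector_mult_def ones_def diag_vec_def)

lemma compact_Q_feasible: "compact {X::real^'n::finite^'n. Q_feasible t X}"
proof -
  have "{X::real^'n^'n. Q_feasible t X} = {X. psd X \<and> nonneg_mat X \<and> trace X = t}
      \<inter> {X. \<forall>i. (\<Sum>j\<in>UNIV. X$i$j) = t * X$i$i}"
    by (auto simp: Q_feasible_iff_row_sums)
  then show ?thesis
    by (simp only:) (intro compact_psd_nonneg_trace_Int closed_Collect_all closed_Collect_eq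
        continuous_intros)
qed

text \<open>Cauchy--Schwarz for the form of X applied to v and e: since \<open>Xe = t diag(X)\<close> and
  \<open>e\<^sup>TXe = t\<^sup>2\<close>, it reads \<open>(v\<^sup>T diag(X))\<^sup>2 \<le> v\<^sup>TXv\<close>.\<close>

lemma Q_feasible_psd_diff_outer_diag:
  assumes "Q_feasible t X" and "0 < t"
  shows "psd (X - outer (diag_vec X))"
proof -
  have X: "psd X" and trace: "trace X = t" and row_sums: "\<And>i. (\<Sum>j\<in>UNIV. X$i$j) = t * X$i$i"
    using assms(1) by (auto simp: Q_feasible_iff_row_sums)
  have sym: "\<forall>i j. X$i$j = X$j$i"
    using X by (simp add: psd_iff_quad_form)
  have ones: "quad_form X ones = t\<^sup>2"
    using row_sums trace by (simp add: quad_form_ones trace_def sum_distrib_left[symmetric] power2_eq_square)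
  have "(v \<bullet> diag_vec X)\<^sup>2 \<le> quad_form X v" for v
  proof -
    define b where "b = bilin_form X v ones"
    have "v \<bullet> diag_vec X = b / t"
      using assms(2) row_sums
      by (simp add: b_def bilin_form_def inner_vec_def diag_vec_def ones_def sum_divide_distrib
          sum_distrib_left[symmetric])
    moreover have "0 \<le> quad_form X (v + (- (b / t\<^sup>2)) *\<^sub>R ones)"
      using X by (simp add: psd_iff_quad_form)
    moreover have "quad_form X (v + (- (b / t\<^sup>2)) *\<^sub>R ones) = quad_form X v - b\<^sup>2 / t\<^sup>2"
      unfolding quad_form_add_scaleR[OF sym] ones b_def[symmetric] using assms(2)
      by (simp add: field_simps power2_eq_square)
    ultimately show ?thesis
      by (simp add: power_divide)
  qed
  then show ?thesis
    unfolding psd_iff_quad_form quad_form_diff quad_form_outer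
    using sym by (simp add: outer_def mult.commute)
qed

text \<open>With \<open>t = \<beta>s + (1 - \<beta>)\<close>, the mixture \<open>\<beta>X + (1 - \<beta>) diag(X)\<close> has row sums
  \<open>t diag(X)\<close>; rescaling by \<open>t/s\<close> fixes the trace.\<close>

lemma Q_feasible_shrink:
  assumes X: "Q_feasible s X" and "1 \<le> t" and "t \<le> s"
  obtains M where "Q_feasible t M" and "\<And>i j. X$i$j = 0 \<Longrightarrow> M$i$j = 0"
proof -
  have psd: "psd X" and nonneg: "nonneg_mat X" and trace: "trace X = s"
    and row_sums: "\<And>i. (\<Sum>j\<in>UNIV. X$i$j) = s * X$i$i"
    using X by (auto simp: Q_feasible_iff_row_sums)
  obtain \<beta> where \<beta>: "0 \<le> \<beta>" "\<beta> \<le> 1" "\<beta> * s + (1 - \<beta>) = t"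
  proof (cases "s = 1")
    case True
    then show ?thesis
      using that[of 1] assms by simp
  next
    case False
    then have "0 < s - 1"
      using assms by simp
    define \<beta> where "\<beta> = (t - 1) / (s - 1)"
    have "\<beta> * (s - 1) = t - 1" and "0 \<le> \<beta>" and "\<beta> \<le> 1"
      using \<open>0 < s - 1\<close> assms by (simp_all add: \<beta>_def divide_le_eq_1_pos)
    then show ?thesis
      using that[of \<beta>] by (simp add: algebra_simps)
  qed
  have s_pos: "0 < s"
    using assms by simp
  define M where "M = (t / s) *\<^sub>R (\<beta> *\<^sub>R X + (1 - \<beta>) *\<^sub>R diag_part X)"
  have M_entry: "M$i$j = (t / s) * (\<beta> * X$i$j + (1 - \<beta>) * (if i = j then X$i$j else 0))" for i j
    by (simp add: M_def diag_part_def)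
  have "psd M"
    unfolding M_def using assms \<beta> s_pos
    by (intro psd_scaleR psd_add psd_diag_part psd) auto
  moreover have "nonneg_mat M"
    using nonneg assms \<beta> s_pos by (auto simp: nonneg_mat_def M_entry)
  moreover have "trace M = t"
  proof -
    have "trace M = (t / s) * (\<beta> * trace X + (1 - \<beta>) * trace (diag_part X))"
      by (simp only: M_def trace_scaleR trace_add)
    then show ?thesis
      using s_pos by (simp add: trace_diag_part trace field_simps)
  qed
  moreover have "(\<Sum>j\<in>UNIV. M$i$j) = t * M$i$i" for i
  proof -
    have "(\<Sum>j\<in>UNIV. M$i$j)
        = (t / s) * (\<beta> * (\<Sum>j\<in>UNIV. X$i$j) + (1 - \<beta>) * (\<Sum>j\<in>UNIV. diag_part X $ i $ j))"
      unfolding M_def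
      by (simp only: vector_scaleR_component vector_add_component real_scaleR_def
          sum.distrib sum_distrib_left[symmetric])
    also have "\<dots> = (t / s) * ((\<beta> * s + (1 - \<beta>)) * X$i$i)"
      by (simp add: row_sums row_sum_diag_part algebra_simps)
    also have "\<dots> = t * M$i$i"
      using \<beta>(3) by (simp add: M_entry algebra_simps)
    finally show ?thesis .
  qed
  ultimately have "Q_feasible t M"
    by (simp only: Q_feasible_iff_row_sums) blast
  moreover have "M$i$j = 0" if "X$i$j = 0" for i j
    using that by (cases "i = j") (simp_all add: M_entry)
  ultimately show ?thesis
    using that by blast
qed

lemma Q_feasible_outer_ones: "Q_feasible (real CARD('n)) (outer ones :: real^'n::finite^'n)"
  using psd_outer[of ones]
  by (simp add: Q_feasible_iff_row_sums nonneg_mat_def trace_def outer_def ones_def)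

lemma Q_feasible_exists:
  assumes "1 \<le> t" and "t \<le> real CARD('n::finite)"
  shows "\<exists>X::real^'n^'n. Q_feasible t X"
  using Q_feasible_shrink[OF Q_feasible_outer_ones assms] by metis

definition zero_on_edges :: "('n::finite \<Rightarrow> 'n \<Rightarrow> bool) \<Rightarrow> real^'n^'n \<Rightarrow> bool" where
  "zero_on_edges E X \<longleftrightarrow> (\<forall>i j. E i j \<longrightarrow> X$i$j = 0)"

lemma frob_eq_sum: "frob M N = (\<Sum>i\<in>UNIV. \<Sum>j\<in>UNIV. M$j$i * N$j$i)"
  by (simp add: frob_def trace_def matrix_matrix_mult_def transpose_def)

lemma frob_adj_matrix: "frob (adj_matrix E) X = (\<Sum>i\<in>UNIV. \<Sum>j\<in>UNIV. if E j i then X$j$i else 0)"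
  unfolding frob_eq_sum adj_matrix_def by (intro sum.cong refl) auto

lemma frob_adj_matrix_nonneg: "nonneg_mat X \<Longrightarrow> 0 \<le> frob (adj_matrix E) X"
  unfolding frob_adj_matrix nonneg_mat_def by (intro sum_nonneg) auto

lemma frob_adj_matrix_eq_0_iff:
  assumes "nonneg_mat X"
  shows "frob (adj_matrix E) X = 0 \<longleftrightarrow> zero_on_edges E X"
proof -
  have nonneg: "0 \<le> (if E j i then X$j$i else 0)" for i j
    using assms by (simp add: nonneg_mat_def)
  have "frob (adj_matrix E) X = 0 \<longleftrightarrow> (\<forall>i j. (if E j i then X$j$i else 0) = 0)"
    unfolding frob_adj_matrix using nonneg
    by (simp add: sum_nonneg_eq_0_iff sum_nonneg)
  then show ?thesis
    by (auto simp: zero_on_edges_def)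
qed

lemma S_val_pos_iff:
  fixes E :: "'n::finite \<Rightarrow> 'n \<Rightarrow> bool"
  assumes "\<exists>X::real^'n^'n. Q_feasible t X"
  shows "0 < S_val E t \<longleftrightarrow> \<not> (\<exists>X. Q_feasible t X \<and> zero_on_edges E X)"
proof -
  let ?f = "\<lambda>X. frob (adj_matrix E) X / 2"
  let ?K = "{X::real^'n^'n. Q_feasible t X}"
  have "continuous_on ?K ?f"
    unfolding frob_eq_sum by (intro continuous_intros) auto
  moreover have "?K \<noteq> {}"
    using assms by simp
  ultimately obtain X0 where X0: "X0 \<in> ?K" and min: "\<forall>X\<in>?K. ?f X0 \<le> ?f X"
    using continuous_attains_inf[OF compact_Q_feasible] by meson
  have nonneg: "0 \<le> ?f X" and zero_iff: "?f X = 0 \<longleftrightarrow> zero_on_edges E X" if "X \<in> ?K" for X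
  proof -
    have "nonneg_mat X"
      using that by (simp add: Q_feasible_def)
    then show "0 \<le> ?f X" and "?f X = 0 \<longleftrightarrow> zero_on_edges E X"
      using frob_adj_matrix_nonneg frob_adj_matrix_eq_0_iff by simp_all
  qed
  have "S_val E t = ?f X0"
    unfolding S_val_def
    using X0 min by (intro cInf_eq_minimum) blast+
  show ?thesis
  proof
    assume "0 < S_val E t"
    show "\<not> (\<exists>X. Q_feasible t X \<and> zero_on_edges E X)"
    proof
      assume "\<exists>X. Q_feasible t X \<and> zero_on_edges E X"
      then obtain X where "X \<in> ?K" and "?f X = 0"
        using zero_iff by blast
      then show False
        using min \<open>0 < S_val E t\<close> \<open>S_val E t = ?f X0\<close> by fastforce
    qed
  next
    assume "\<not> (\<exists>X. Q_feasible t X \<and> zero_on_edges E X)"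
    then have "?f X0 \<noteq> 0"
      using X0 zero_iff by blast
    then show "0 < S_val E t"
      using \<open>S_val E t = ?f X0\<close> nonneg[OF X0] by linarith
  qed
qed

text \<open>The feasible set of Schrijver's dual formulation \<open>\<vartheta>\<^sup>+ = max \<langle>J, Z\<rangle>\<close>.\<close>

definition schrijver_set :: "('n::finite \<Rightarrow> 'n \<Rightarrow> bool) \<Rightarrow> (real^'n^'n) set" where
  "schrijver_set E = {Z. psd Z \<and> nonneg_mat Z \<and> trace Z = 1 \<and> zero_on_edges E Z}"

definition is_schrijver_maximizer :: "('n::finite \<Rightarrow> 'n \<Rightarrow> bool) \<Rightarrow> real^'n^'n \<Rightarrow> bool" where
  "is_schrijver_maximizer E Z \<longleftrightarrow>
     Z \<in> schrijver_set E \<and> (\<forall>Y\<in>schrijver_set E. quad_form Y ones \<le> quad_form Z ones)"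

lemma compact_schrijver_set: "compact (schrijver_set E)"
proof -
  have "schrijver_set E = {Z. psd Z \<and> nonneg_mat Z \<and> trace Z = 1} \<inter> {Z. zero_on_edges E Z}"
    by (auto simp: schrijver_set_def)
  then show ?thesis
    unfolding zero_on_edges_def
    by (simp only:) (intro compact_psd_nonneg_trace_Int closed_Collect_all closed_Collect_imp
        closed_Collect_eq continuous_intros; auto)
qed

lemma outer_axis_in_schrijver_set:
  assumes "simple_graph E"
  shows "outer (axis k 1) \<in> schrijver_set E"
proof -
  have "trace (outer (axis k 1)) = 1"
    by (simp add: trace_def outer_def sum_axis_mult)
  moreover have "zero_on_edges E (outer (axis k 1))"
    using assms by (auto simp: zero_on_edges_def simple_graph_def outer_def axis_def)
  ultimately show ?thesis
    using psd_outer[of "axis k 1"] by (simp add: schrijver_set_def nonneg_mat_def outer_def axis_def)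
qed

lemma schrijver_maximizer_exists:
  assumes "simple_graph E"
  obtains Z where "is_schrijver_maximizer E Z"
proof -
  have "continuous_on (schrijver_set E) (\<lambda>Z. quad_form Z ones)"
    unfolding quad_form_def by (intro continuous_intros)
  then show ?thesis
    using continuous_attains_sup[OF compact_schrijver_set] outer_axis_in_schrijver_set[OF assms]
      that unfolding is_schrijver_maximizer_def by blast
qed

lemma schrijver_maximizer_ge_1:
  fixes E :: "'n::finite \<Rightarrow> 'n \<Rightarrow> bool"
  assumes "simple_graph E" and "is_schrijver_maximizer E Z"
  shows "1 \<le> quad_form Z ones"
proof -
  have "quad_form (outer (axis k 1)) ones = 1" for k :: 'n
    by (simp add: quad_form_outer inner_vec_def ones_def axis_def)
  then show ?thesis
    using assms outer_axis_in_schrijver_set unfolding is_schrijver_maximizer_def by metis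
qed

definition diag_congr :: "real^'n::finite \<Rightarrow> real^'n^'n \<Rightarrow> real^'n^'n" where
  "diag_congr d Z = (\<chi> i j. d$i * d$j * Z$i$j)"

lemma quad_form_diag_congr: "quad_form (diag_congr d Z) v = quad_form Z (d * v)"
  by (simp add: quad_form_def diag_congr_def ac_simps)

lemma diag_congr_normalized_in_schrijver_set:
  assumes Z: "Z \<in> schrijver_set E" and d: "\<And>i. 0 < d$i"
  shows "0 < trace (diag_congr d Z)"
    and "(1 / trace (diag_congr d Z)) *\<^sub>R diag_congr d Z \<in> schrijver_set E"
proof -
  have psd: "psd Z" and nonneg: "nonneg_mat Z" and trace: "trace Z = 1" and zero: "zero_on_edges E Z"
    using Z by (auto simp: schrijver_set_def)
  have "\<exists>k. Z$k$k \<noteq> 0"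
  proof (rule ccontr)
    assume "\<not> (\<exists>k. Z$k$k \<noteq> 0)"
    then have "trace Z = 0"
      by (simp add: trace_def)
    with trace show False
      by simp
  qed
  then obtain k where "Z$k$k \<noteq> 0"
    by blast
  then have "0 < d$k * d$k * Z$k$k"
    using d nonneg by (simp add: nonneg_mat_def order_less_le)
  also have "\<dots> \<le> (\<Sum>i\<in>UNIV. d$i * d$i * Z$i$i)"
    using d nonneg unfolding nonneg_mat_def
    by (intro member_le_sum) (auto intro: less_imp_le)
  also have "\<dots> = trace (diag_congr d Z)"
    by (simp add: trace_def diag_congr_def)
  finally show pos: "0 < trace (diag_congr d Z)" .
  let ?c = "1 / trace (diag_congr d Z)"
  have "psd (diag_congr d Z)"
    using psd unfolding psd_iff_quad_form quad_form_diag_congr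
    by (simp add: diag_congr_def mult_ac)
  then have "psd (?c *\<^sub>R diag_congr d Z)"
    using pos by (simp add: psd_scaleR)
  moreover have "nonneg_mat (?c *\<^sub>R diag_congr d Z)"
    using nonneg d pos by (simp add: nonneg_mat_def diag_congr_def less_imp_le)
  moreover have "trace (?c *\<^sub>R diag_congr d Z) = 1"
    using pos by (simp add: trace_scaleR)
  moreover have "zero_on_edges E (?c *\<^sub>R diag_congr d Z)"
    using zero by (simp add: zero_on_edges_def diag_congr_def)
  ultimately show "?c *\<^sub>R diag_congr d Z \<in> schrijver_set E"
    by (simp add: schrijver_set_def)
qed

lemma linear_coeff_eq_0_if_nonpos_near_0:
  fixes a b h :: real
  assumes "0 < h" and nonpos: "\<And>e. \<bar>e\<bar> \<le> h \<Longrightarrow> e * a + e\<^sup>2 * b \<le> 0"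
  shows "a = 0"
proof (rule ccontr)
  assume "a \<noteq> 0"
  define m where "m = min h (\<bar>a\<bar> / (\<bar>b\<bar> + 1))"
  have m_pos: "0 < m"
    using assms(1) \<open>a \<noteq> 0\<close> by (simp add: m_def)
  have "m \<le> \<bar>a\<bar> / (\<bar>b\<bar> + 1)"
    by (simp add: m_def)
  then have "m * (\<bar>b\<bar> + 1) \<le> \<bar>a\<bar>"
    by (simp add: pos_le_divide_eq)
  then have "- (m * b) < \<bar>a\<bar>"
    using m_pos abs_ge_minus_self[of b] mult_left_mono[of "- b" "\<bar>b\<bar>" m] by (simp add: algebra_simps)
  then have "0 < m * (\<bar>a\<bar> + m * b)"
    using m_pos by simp
  moreover have "(sgn a * m) * a + (sgn a * m)\<^sup>2 * b = m * (\<bar>a\<bar> + m * b)"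
    using \<open>a \<noteq> 0\<close> by (simp add: power2_eq_square algebra_simps abs_sgn sgn_mult_self_eq)
  moreover have "\<bar>sgn a * m\<bar> \<le> h"
    using \<open>a \<noteq> 0\<close> m_pos by (simp add: abs_mult m_def)
  ultimately show False
    using nonpos by fastforce
qed

text \<open>First-order optimality of a maximiser Z along the rescalings \<open>Z \<mapsto> DZD / trace(DZD)\<close>
  with \<open>D = I + \<epsilon> e\<^sub>k e\<^sub>k\<^sup>T\<close>.\<close>

lemma schrijver_maximizer_row_sum:
  assumes max: "is_schrijver_maximizer E Z"
  shows "(\<Sum>j\<in>UNIV. Z$k$j) = quad_form Z ones * Z$k$k"
proof -
  have Z: "Z \<in> schrijver_set E"
    using max by (simp add: is_schrijver_maximizer_def)
  then have sym: "\<forall>i j. Z$i$j = Z$j$i" and trace: "trace Z = 1"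
    by (auto simp: schrijver_set_def psd_iff_quad_form)
  define \<sigma> r z where "\<sigma> = quad_form Z ones" and "r = (\<Sum>j\<in>UNIV. Z$k$j)" and "z = Z$k$k"
  have "e * (2 * (r - \<sigma> * z)) + e\<^sup>2 * (z - \<sigma> * z) \<le> 0" if e: "\<bar>e\<bar> \<le> 1/2" for e
  proof -
    define d where "d = ones + e *\<^sub>R axis k 1"
    have d_entry: "d$i = (if i = k then 1 + e else 1)" for i
      by (simp add: d_def ones_def axis_def)
    have "0 < 1 + e"
      using e by arith
    then have d_pos: "0 < d$i" for i
      by (simp add: d_entry)
    let ?W = "diag_congr d Z"
    have "d * ones = d"
      by (simp add: vec_eq_iff ones_def)
    then have "quad_form ?W ones = quad_form Z (ones + e *\<^sub>R axis k 1)"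
      by (simp add: quad_form_diag_congr d_def)
    also have "\<dots> = \<sigma> + 2 * e * r + e\<^sup>2 * z"
      using bilin_form_commute[OF sym, of ones "axis k 1"]
      by (simp add: quad_form_add_scaleR[OF sym] bilin_form_axis_ones quad_form_axis \<sigma>_def r_def z_def)
    finally have quad_W: "quad_form ?W ones = \<sigma> + 2 * e * r + e\<^sup>2 * z" .
    have "?W$i$i = Z$i$i + (if i = k then (2 * e + e\<^sup>2) * z else 0)" for i
      by (simp add: diag_congr_def d_entry z_def power2_eq_square algebra_simps)
    then have trace_W: "trace ?W = 1 + (2 * e + e\<^sup>2) * z"
      using trace by (simp add: trace_def sum.distrib)
    have "quad_form ((1 / trace ?W) *\<^sub>R ?W) ones \<le> \<sigma>"
      using max diag_congr_normalized_in_schrijver_set(2)[OF Z d_pos]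
      unfolding is_schrijver_maximizer_def \<sigma>_def by blast
    then have "\<sigma> + 2 * e * r + e\<^sup>2 * z \<le> \<sigma> * (1 + (2 * e + e\<^sup>2) * z)"
      using diag_congr_normalized_in_schrijver_set(1)[OF Z d_pos]
      by (simp add: quad_form_scaleR quad_W trace_W pos_divide_le_eq)
    then show ?thesis
      by (simp add: algebra_simps)
  qed
  then have "2 * (r - \<sigma> * z) = 0"
    by (intro linear_coeff_eq_0_if_nonpos_near_0[of "1/2"]) auto
  then show ?thesis
    by (simp add: r_def \<sigma>_def z_def)
qed

lemma schrijver_maximizer_Q_feasible:
  assumes "simple_graph E" and max: "is_schrijver_maximizer E Z"
  shows "Q_feasible (quad_form Z ones) (quad_form Z ones *\<^sub>R Z)"
    and "zero_on_edges E (quad_form Z ones *\<^sub>R Z)"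
proof -
  have Z: "psd Z" "nonneg_mat Z" "trace Z = 1" "zero_on_edges E Z"
    using max by (auto simp: is_schrijver_maximizer_def schrijver_set_def)
  have \<sigma>: "1 \<le> quad_form Z ones"
    using schrijver_maximizer_ge_1[OF assms] .
  have "(\<Sum>j\<in>UNIV. quad_form Z ones * Z$i$j) = quad_form Z ones * (quad_form Z ones * Z$i$i)" for i
    using schrijver_maximizer_row_sum[OF max, of i] by (simp flip: sum_distrib_left)
  then show "Q_feasible (quad_form Z ones) (quad_form Z ones *\<^sub>R Z)"
    using Z \<sigma> by (simp add: Q_feasible_iff_row_sums psd_scaleR trace_scaleR nonneg_mat_def)
  show "zero_on_edges E (quad_form Z ones *\<^sub>R Z)"
    using Z by (simp add: zero_on_edges_def)
qed

definition theta_plus_feasible :: "('n::finite \<Rightarrow> 'n \<Rightarrow> bool) \<Rightarrow> real^'n^'n \<Rightarrow> bool" where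
  "theta_plus_feasible E X \<longleftrightarrow> psd (X - outer (diag_vec X)) \<and> zero_on_edges E X \<and> nonneg_mat X"

lemma theta_plus_eq_Sup: "theta_plus E = Sup (trace ` {X. theta_plus_feasible E X})"
  unfolding theta_plus_def theta_plus_feasible_def zero_on_edges_def
  by (rule arg_cong[where f = Sup]) auto

lemma theta_plus_feasible_trace_le_card:
  fixes X :: "real^'n::finite^'n"
  assumes "theta_plus_feasible E X"
  shows "trace X \<le> real CARD('n)"
proof -
  have "X$i$i \<le> 1" for i
  proof -
    have "0 \<le> X$i$i * (1 - X$i$i)"
      using assms psd_diag_nonneg[of "X - outer (diag_vec X)" i]
      by (simp add: theta_plus_feasible_def outer_def diag_vec_def algebra_simps)
    then show ?thesis
      by (auto simp: zero_le_mult_iff)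
  qed
  then show ?thesis
    unfolding trace_def using sum_mono[of UNIV "\<lambda>i. X$i$i" "\<lambda>_. 1"] by simp
qed

lemma trace_le_theta_plus:
  assumes "theta_plus_feasible E X"
  shows "trace X \<le> theta_plus E"
  unfolding theta_plus_eq_Sup
proof (rule cSup_upper)
  show "trace X \<in> trace ` {X. theta_plus_feasible E X}"
    using assms by simp
  show "bdd_above (trace ` {X. theta_plus_feasible E X})"
    using theta_plus_feasible_trace_le_card by (intro bdd_aboveI2) blast
qed

lemma theta_plus_le_schrijver_maximizer:
  assumes "simple_graph E" and max: "is_schrijver_maximizer E Z"
  shows "theta_plus E \<le> quad_form Z ones"
  unfolding theta_plus_eq_Sup
proof (rule cSup_least)
  have "theta_plus_feasible E 0"
    by (simp add: theta_plus_feasible_def zero_on_edges_def nonneg_mat_def outer_def diag_vec_def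
        psd_iff_quad_form quad_form_def zero_vec_def)
  then show "trace ` {X. theta_plus_feasible E X} \<noteq> {}"
    by blast
next
  fix s assume "s \<in> trace ` {X. theta_plus_feasible E X}"
  then obtain X where s: "s = trace X" and "theta_plus_feasible E X"
    by blast
  then have X: "psd (X - outer (diag_vec X))" "zero_on_edges E X" "nonneg_mat X"
    by (auto simp: theta_plus_feasible_def)
  have psd: "psd X"
    using psd_add[OF X(1) psd_outer[of "diag_vec X"]] by simp
  have "trace X = ones \<bullet> diag_vec X"
    by (simp add: trace_def inner_vec_def ones_def diag_vec_def)
  then have "s\<^sup>2 \<le> quad_form X ones"
    using X(1) by (simp add: s psd_iff_quad_form quad_form_diff quad_form_outer)
  have "0 \<le> s"
    using X(3) unfolding s trace_def nonneg_mat_def by (simp add: sum_nonneg)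
  show "s \<le> quad_form Z ones"
  proof (cases "s = 0")
    case False
    with \<open>0 \<le> s\<close> have "0 < s" by simp
    then have "(1 / s) *\<^sub>R X \<in> schrijver_set E"
      using psd X by (simp add: schrijver_set_def psd_scaleR nonneg_mat_def trace_scaleR s
          zero_on_edges_def)
    then have "quad_form ((1 / s) *\<^sub>R X) ones \<le> quad_form Z ones"
      using max by (auto simp: is_schrijver_maximizer_def)
    then have "quad_form X ones / s \<le> quad_form Z ones"
      by (simp add: quad_form_scaleR)
    moreover have "s \<le> quad_form X ones / s"
      using \<open>0 < s\<close> \<open>s\<^sup>2 \<le> quad_form X ones\<close> by (simp add: pos_le_divide_eq power2_eq_square)
    ultimately show ?thesis
      by linarith
  qed (use schrijver_maximizer_ge_1[OF assms] in simp)
qed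

lemma ex_Q_feasible_zero_on_edges_iff:
  assumes G: "simple_graph E" and "1 \<le> t"
  shows "(\<exists>X. Q_feasible t X \<and> zero_on_edges E X) \<longleftrightarrow> t \<le> theta_plus E"
proof
  assume "\<exists>X. Q_feasible t X \<and> zero_on_edges E X"
  then obtain X where X: "Q_feasible t X" "zero_on_edges E X"
    by blast
  have "psd (X - outer (diag_vec X))"
    by (rule Q_feasible_psd_diff_outer_diag[OF X(1)]) (use \<open>1 \<le> t\<close> in simp)
  then have "theta_plus_feasible E X"
    using X by (simp add: theta_plus_feasible_def Q_feasible_def)
  then show "t \<le> theta_plus E"
    using trace_le_theta_plus X(1) by (fastforce simp: Q_feasible_def)
next
  assume "t \<le> theta_plus E"
  obtain Z where max: "is_schrijver_maximizer E Z"
    using schrijver_maximizer_exists[OF G] .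
  have "t \<le> quad_form Z ones"
    using \<open>t \<le> theta_plus E\<close> theta_plus_le_schrijver_maximizer[OF G max] by linarith
  then obtain M where "Q_feasible t M" and "\<And>i j. (quad_form Z ones *\<^sub>R Z)$i$j = 0 \<Longrightarrow> M$i$j = 0"
    using Q_feasible_shrink[OF schrijver_maximizer_Q_feasible(1)[OF G max] \<open>1 \<le> t\<close>] by blast
  then show "\<exists>X. Q_feasible t X \<and> zero_on_edges E X"
    using schrijver_maximizer_Q_feasible(2)[OF G max] by (auto simp: zero_on_edges_def)
qed

theorem mainTheorem12:
  fixes E :: "'n::finite \<Rightarrow> 'n \<Rightarrow> bool" and t :: real
  assumes "simple_graph E"
    and "1 \<le> t" and "t \<le> real CARD('n)"
  shows "S_val E t > 0 \<longleftrightarrow> t > theta_plus E"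
  unfolding S_val_pos_iff[OF Q_feasible_exists[OF assms(2,3)]]
    ex_Q_feasible_zero_on_edges_iff[OF assms(1,2)] by (simp add: not_le)

end
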